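(* If $X$ is a locally Menger Hausdorff $P$-space, then $w(X)\leq nw(X)^{\aleph_0}$.
   Context: $w(X)$ is the smallest cardinality of a base of $X$. A network for $X$ is a family $\mathcal{N}$ of subsets of $X$ such that for every $x\in X$ and every neighbourhood $U$ of $x$ there is $A\in\mathcal{N}$ with $x\in A\subseteq U$; $nw(X)$ is the smallest cardinality of a network for $X$. A space $X$ is Menger if for each sequence $(\mathcal{U}_n)$ of open covers of $X$ there is a sequence $(\mathcal{V}_n)$ with each $\mathcal{V}_n$ a finite subset of $\mathcal{U}_n$ and $\bigcup_{n}\bigcup\mathcal{V}_n=X$. A space $X$ is locally Menger if for each $x\in X$ there exist an open set $U$ and a Menger subspace $Y$ of $X$ with $x\in U\subseteq Y$. A $P$-space is a space in which every countable intersection of open sets is open. *)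

theory Defs
  imports "HOL-Analysis.Analysis"
begin

definition is_base :: "'a topology \<Rightarrow> 'a set set \<Rightarrow> bool" where
  "is_base X \<B> \<longleftrightarrow> (\<forall>B\<in>\<B>. openin X B) \<and>
     (\<forall>U. openin X U \<longrightarrow> (\<exists>\<C>\<subseteq>\<B>. \<Union>\<C> = U))"

definition is_network :: "'a topology \<Rightarrow> 'a set set \<Rightarrow> bool" where
  "is_network X \<N> \<longleftrightarrow> (\<forall>A\<in>\<N>. A \<subseteq> topspace X) \<and>
     (\<forall>x U. openin X U \<and> x \<in> U \<longrightarrow> (\<exists>A\<in>\<N>. x \<in> A \<and> A \<subseteq> U))"

definition Menger_space :: "'a topology \<Rightarrow> bool" where
  "Menger_space X \<longleftrightarrow>
     (\<forall>\<U> :: nat \<Rightarrow> 'a set set.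
        (\<forall>n. (\<forall>U\<in>\<U> n. openin X U) \<and> topspace X \<subseteq> \<Union>(\<U> n)) \<longrightarrow>
        (\<exists>\<V> :: nat \<Rightarrow> 'a set set. (\<forall>n. finite (\<V> n) \<and> \<V> n \<subseteq> \<U> n) \<and>
            topspace X \<subseteq> (\<Union>n. \<Union>(\<V> n))))"

definition locally_Menger :: "'a topology \<Rightarrow> bool" where
  "locally_Menger X \<longleftrightarrow>
     (\<forall>x\<in>topspace X. \<exists>U Y. openin X U \<and> x \<in> U \<and> U \<subseteq> Y \<and> Y \<subseteq> topspace X \<and>
        Menger_space (subtopology X Y))"

text \<open>P-space: every countable intersection of open sets is open
  (intersection taken inside the space, so the empty family gives the whole space).\<close>
definition P_space :: "'a topology \<Rightarrow> bool" where
  "P_space X \<longleftrightarrow>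
     (\<forall>\<F>. countable \<F> \<and> (\<forall>U\<in>\<F>. openin X U) \<longrightarrow> openin X (topspace X \<inter> \<Inter>\<F>))"

end

theory Submission
  imports Defs
begin

text \<open>Menger spaces are Lindelof. In a Hausdorff P-space the countably many Hausdorff separations
  that a Lindelof set needs can be intersected, so Lindelof sets are closed and can be separated
  from outside points; a locally Lindelof such space is therefore regular. A regular P-space is
  zero-dimensional, since the intersection of a sequence of neighbourhoods each containing the
  closure of the next is open and closed. So every point has a base of clopen Lindelof
  neighbourhoods K.

  For network sets A, A' fix a clopen Lindelof C(A, A') containing A and missing A', whenever one
  exists. If A \<subseteq> K, every y outside K lies in a network set A_y missing K, so
  C(A, A_y) exists and misses y; the Lindelof set C(A, A_z) - K is then covered by
  countably many complements of such sets, and a countable intersection of sets C(A, _) lies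
  between A and K. These countable intersections are open in a P-space, form a base, and are
  indexed by sequences of network sets.\<close>

lemma Menger_imp_Lindelof_space:
  assumes "Menger_space X"
  shows "Lindelof_space X"
  unfolding Lindelof_space_alt
proof (intro allI impI)
  fix \<U> assume \<U>: "(\<forall>U\<in>\<U>. openin X U) \<and> topspace X \<subseteq> \<Union>\<U>"
  then obtain \<V> :: "nat \<Rightarrow> 'a set set"
    where \<V>: "\<forall>n. finite (\<V> n) \<and> \<V> n \<subseteq> \<U>" "topspace X \<subseteq> (\<Union>n. \<Union>(\<V> n))"
    using assms[unfolded Menger_space_def, rule_format, of "\<lambda>_. \<U>"] by auto
  have "countable (\<Union>n. \<V> n)"
    using \<V>(1) by (auto intro: countable_finite)
  moreover have "(\<Union>n. \<V> n) \<subseteq> \<U>"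
    using \<V>(1) by blast
  moreover have "topspace X \<subseteq> \<Union>(\<Union>n. \<V> n)"
    using \<V>(2) by blast
  ultimately show "\<exists>\<W>. countable \<W> \<and> \<W> \<subseteq> \<U> \<and> topspace X \<subseteq> \<Union>\<W>"
    by blast
qed

lemma locally_Menger_imp_Lindelof_neighbourhood:
  assumes "locally_Menger X" "x \<in> topspace X"
  obtains U Y where "openin X U" "x \<in> U" "U \<subseteq> Y" "Y \<subseteq> topspace X"
    "Lindelof_space (subtopology X Y)"
  using assms Menger_imp_Lindelof_space unfolding locally_Menger_def by metis

lemma P_spaceD:
  assumes "P_space X" "countable I" "\<And>i. i \<in> I \<Longrightarrow> openin X (F i)"
  shows "openin X (topspace X \<inter> \<Inter>(F ` I))"
  using assms unfolding P_space_def by auto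

lemma Lindelof_space_subtopology_Int_closedin:
  assumes "Lindelof_space (subtopology X L)" "closedin X F"
  shows "Lindelof_space (subtopology X (L \<inter> F))"
  using Lindelof_space_closedin_subtopology[OF assms(1) closedin_subtopology_Int_closed[OF assms(2)]]
  by (simp add: subtopology_subtopology)

lemma Lindelof_space_subtopology_countable_subcover:
  assumes "Lindelof_space (subtopology X L)" "L \<subseteq> topspace X"
    and "\<And>y. y \<in> L \<Longrightarrow> openin X (U y)" "\<And>y. y \<in> L \<Longrightarrow> y \<in> U y"
  obtains T where "countable T" "T \<subseteq> L" "L \<subseteq> \<Union>(U ` T)"
proof -
  have "\<forall>V\<in>U ` L. openin X V" "L \<subseteq> \<Union>(U ` L)"
    using assms(3,4) by auto
  then obtain \<V> where "countable \<V>" "\<V> \<subseteq> U ` L" "L \<subseteq> \<Union>\<V>"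
    using assms(1) unfolding Lindelof_space_subtopology_subset[OF assms(2)] by meson
  then show thesis
    using that countable_subset_image[of \<V> U L] by metis
qed

lemma P_space_Lindelof_point_separation:
  assumes "Hausdorff_space X" "P_space X" "Lindelof_space (subtopology X L)" "L \<subseteq> topspace X"
    and "z \<in> topspace X - L"
  obtains U V where "openin X U" "openin X V" "L \<subseteq> U" "z \<in> V" "disjnt U V"
proof -
  have "\<forall>y\<in>L. \<exists>U V. openin X U \<and> openin X V \<and> y \<in> U \<and> z \<in> V \<and> disjnt U V"
    using assms(1,4,5) unfolding Hausdorff_space_def by blast
  then obtain U V where U: "\<And>y. y \<in> L \<Longrightarrow> openin X (U y) \<and> y \<in> U y"
    and V: "\<And>y. y \<in> L \<Longrightarrow> openin X (V y) \<and> z \<in> V y"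
    and UV: "\<And>y. y \<in> L \<Longrightarrow> disjnt (U y) (V y)"
    by metis
  obtain T where T: "countable T" "T \<subseteq> L" "L \<subseteq> \<Union>(U ` T)"
    using Lindelof_space_subtopology_countable_subcover[OF assms(3,4), of U] U by blast
  show thesis
  proof
    show "openin X (\<Union>(U ` T))"
      using T(2) U by blast
    show "openin X (topspace X \<inter> \<Inter>(V ` T))"
      using T V P_spaceD[OF assms(2) T(1), of V] by blast
    show "z \<in> topspace X \<inter> \<Inter>(V ` T)"
      using assms(5) T(2) V by blast
    show "disjnt (\<Union>(U ` T)) (topspace X \<inter> \<Inter>(V ` T))"
      using T(2) UV unfolding disjnt_iff by blast
  qed (use T in blast)
qed

lemma P_space_Lindelof_imp_closedin:
  assumes "Hausdorff_space X" "P_space X" "Lindelof_space (subtopology X L)" "L \<subseteq> topspace X"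
  shows "closedin X L"
proof -
  have "openin X (topspace X - L)"
  proof (subst openin_subopen, intro ballI)
    fix z assume "z \<in> topspace X - L"
    then obtain U V where "openin X U" "openin X V" "L \<subseteq> U" "z \<in> V" "disjnt U V"
      using P_space_Lindelof_point_separation[OF assms] by metis
    moreover from this have "V \<subseteq> topspace X - L"
      using openin_subset unfolding disjnt_iff by blast
    ultimately show "\<exists>V. openin X V \<and> z \<in> V \<and> V \<subseteq> topspace X - L"
      by blast
  qed
  then show ?thesis
    using assms(4) by (simp add: closedin_def)
qed

lemma locally_Menger_P_space_imp_regular_space:
  assumes "locally_Menger X" "Hausdorff_space X" "P_space X"
  shows "regular_space X"
  unfolding regular_space_def
proof (intro allI impI)
  fix C a assume Ca: "closedin X C \<and> a \<in> topspace X - C"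
  then obtain U Y where UY: "openin X U" "a \<in> U" "U \<subseteq> Y" "Y \<subseteq> topspace X"
    "Lindelof_space (subtopology X Y)"
    using locally_Menger_imp_Lindelof_neighbourhood[OF assms(1), of a] by auto
  have "closedin X Y"
    using P_space_Lindelof_imp_closedin assms UY by blast
  define L where "L = Y \<inter> (topspace X - (U - C))"
  have "Lindelof_space (subtopology X L)"
    unfolding L_def using Ca UY by (intro Lindelof_space_subtopology_Int_closedin) auto
  moreover have "L \<subseteq> topspace X" "a \<in> topspace X - L"
    using Ca UY unfolding L_def by auto
  ultimately obtain Q W where QW: "openin X Q" "openin X W" "L \<subseteq> Q" "a \<in> W" "disjnt Q W"
    using P_space_Lindelof_point_separation[OF assms(2,3)] by metis
  show "\<exists>G V. openin X G \<and> openin X V \<and> a \<in> G \<and> C \<subseteq> V \<and> disjnt G V"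
  proof (intro exI conjI)
    show "openin X (W \<inter> U)" "openin X (Q \<union> (topspace X - Y))"
      using QW UY \<open>closedin X Y\<close> by auto
    show "C \<subseteq> Q \<union> (topspace X - Y)"
      using QW(3) Ca closedin_subset unfolding L_def by blast
    show "disjnt (W \<inter> U) (Q \<union> (topspace X - Y))"
      using QW(5) UY(3) unfolding disjnt_iff by blast
  qed (use QW UY in auto)
qed

lemma regular_space_closure_of_neighbourhood:
  assumes "regular_space X" "openin X W" "x \<in> W"
  obtains H where "openin X H" "x \<in> H" "X closure_of H \<subseteq> W"
proof -
  obtain H C where "openin X H" "closedin X C" "x \<in> H" "H \<subseteq> C" "C \<subseteq> W"
    using assms unfolding neighbourhood_base_of_closedin[symmetric] neighbourhood_base_of
    by metis
  then show thesis
    using that closure_of_minimal by (metis order_trans)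
qed

lemma closedin_Inter_closure_of_nested:
  assumes "\<And>n. X closure_of G (Suc n) \<subseteq> G n"
  shows "closedin X (topspace X \<inter> \<Inter>(range G))"
proof -
  have "topspace X \<inter> \<Inter>(range G) = (\<Inter>n. X closure_of G (Suc n))"
  proof
    show "topspace X \<inter> \<Inter>(range G) \<subseteq> (\<Inter>n. X closure_of G (Suc n))"
      using closure_of_subset_Int[of X "G (Suc _)"] by blast
    show "(\<Inter>n. X closure_of G (Suc n)) \<subseteq> topspace X \<inter> \<Inter>(range G)"
    proof
      fix z assume z: "z \<in> (\<Inter>n. X closure_of G (Suc n))"
      then have "z \<in> X closure_of G (Suc 0)"
        by blast
      then have "z \<in> topspace X"
        using closure_of_subset_topspace by (metis subsetD)
      moreover have "z \<in> G n" for n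
        using z assms[of n] by blast
      ultimately show "z \<in> topspace X \<inter> \<Inter>(range G)"
        by blast
    qed
  qed
  then show ?thesis
    by auto
qed

lemma regular_P_space_imp_dim_le_0:
  assumes "regular_space X" "P_space X"
  shows "X dim_le 0"
  unfolding dimension_le_0_neighbourhood_base_of_clopen neighbourhood_base_of
proof (intro allI impI)
  fix V x assume V: "openin X V \<and> x \<in> V"
  have "\<exists>H. openin X H \<and> x \<in> H \<and> X closure_of H \<subseteq> W" if "openin X W" "x \<in> W" for W
    using regular_space_closure_of_neighbourhood[OF assms(1) that] by metis
  then obtain shrink where shrink: "\<And>W. openin X W \<Longrightarrow> x \<in> W \<Longrightarrow>
      openin X (shrink W) \<and> x \<in> shrink W \<and> X closure_of (shrink W) \<subseteq> W"
    by metis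
  define G where "G n = (shrink ^^ n) V" for n
  have G: "openin X (G n) \<and> x \<in> G n" for n
    by (induction n) (use V shrink in \<open>auto simp: G_def\<close>)
  have "X closure_of G (Suc n) \<subseteq> G n" for n
    using shrink[OF G[THEN conjunct1] G[THEN conjunct2]] by (simp add: G_def)
  define K where "K = topspace X \<inter> \<Inter>(range G)"
  have "closedin X K"
    unfolding K_def by (rule closedin_Inter_closure_of_nested) fact
  moreover have "openin X K"
    unfolding K_def using P_spaceD[OF assms(2), of UNIV G] G by simp
  moreover have "x \<in> K"
    unfolding K_def using G V openin_subset by auto
  moreover have "K \<subseteq> V"
    unfolding K_def using funpow_0[of shrink V] G_def by blast
  ultimately show "\<exists>U K. openin X U \<and> (closedin X K \<and> openin X K) \<and> x \<in> U \<and> U \<subseteq> K \<and> K \<subseteq> V"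
    by blast
qed

lemma locally_Menger_clopen_Lindelof_neighbourhood:
  assumes "locally_Menger X" "Hausdorff_space X" "P_space X" "openin X V" "x \<in> V"
  obtains K where "openin X K" "closedin X K" "Lindelof_space (subtopology X K)" "x \<in> K" "K \<subseteq> V"
proof -
  have x: "x \<in> topspace X"
    using assms(4,5) openin_subset by blast
  obtain U Y where UY: "openin X U" "x \<in> U" "U \<subseteq> Y" "Lindelof_space (subtopology X Y)"
    using locally_Menger_imp_Lindelof_neighbourhood[OF assms(1) x] by metis
  have "X dim_le 0"
    using regular_P_space_imp_dim_le_0 locally_Menger_P_space_imp_regular_space assms(1-3) by blast
  moreover have "openin X (U \<inter> V)" "x \<in> U \<inter> V"
    using assms(4,5) UY(1,2) by auto
  ultimately obtain K where K: "closedin X K \<and> openin X K" "x \<in> K" "K \<subseteq> U \<inter> V"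
    unfolding dimension_le_0_neighbourhood_base_of_clopen neighbourhood_base_of by blast
  have "Lindelof_space (subtopology X (Y \<inter> K))"
    using Lindelof_space_subtopology_Int_closedin[OF UY(4)] K(1) by blast
  moreover have "Y \<inter> K = K"
    using K(3) UY(3) by blast
  ultimately show thesis
    using that K by auto
qed

definition separates_clopen_Lindelof :: "'a topology \<Rightarrow> 'a set \<Rightarrow> 'a set \<Rightarrow> 'a set \<Rightarrow> bool" where
  "separates_clopen_Lindelof X A A' C \<longleftrightarrow> openin X C \<and> closedin X C \<and>
     Lindelof_space (subtopology X C) \<and> A \<subseteq> C \<and> disjnt C A'"

text \<open>The fallback value topspace X keeps every separator clopen and containing A.\<close>

definition clopen_separator :: "'a topology \<Rightarrow> 'a set \<Rightarrow> 'a set \<Rightarrow> 'a set" where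
  "clopen_separator X A A' =
     (if \<exists>C. separates_clopen_Lindelof X A A' C then SOME C. separates_clopen_Lindelof X A A' C
      else topspace X)"

lemma separates_clopen_separator:
  "separates_clopen_Lindelof X A A' C \<Longrightarrow>
    separates_clopen_Lindelof X A A' (clopen_separator X A A')"
  unfolding clopen_separator_def by (auto intro: someI)

lemma clopen_separator_clopen:
  "openin X (clopen_separator X A A') \<and> closedin X (clopen_separator X A A')"
  using separates_clopen_separator[of X A A']
  by (cases "\<exists>C. separates_clopen_Lindelof X A A' C")
    (auto simp: clopen_separator_def separates_clopen_Lindelof_def)

lemma subset_clopen_separator: "A \<subseteq> topspace X \<Longrightarrow> A \<subseteq> clopen_separator X A A'"
  using separates_clopen_separator[of X A A']
  by (cases "\<exists>C. separates_clopen_Lindelof X A A' C")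
    (auto simp: clopen_separator_def separates_clopen_Lindelof_def)

definition separator_base :: "'a topology \<Rightarrow> 'a set set \<Rightarrow> 'a set set" where
  "separator_base X \<N> = {topspace X \<inter> \<Inter>(clopen_separator X A ` \<A>) | A \<A>.
     A \<in> \<N> \<and> \<A> \<subseteq> \<N> \<and> countable \<A> \<and> \<A> \<noteq> {}}"

lemma openin_separator_base:
  assumes "P_space X" "B \<in> separator_base X \<N>"
  shows "openin X B"
  using assms P_spaceD[OF assms(1)] clopen_separator_clopen
  unfolding separator_base_def by blast

lemma card_of_separator_base:
  "ordLeq3 (card_of (separator_base X \<N>))
     (BNF_Cardinal_Arithmetic.cexp (card_of \<N>) (card_of (UNIV :: nat set)))"
proof -
  define g where "g f = topspace X \<inter> \<Inter>(clopen_separator X (f 0) ` range (f \<circ> Suc))"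
    for f :: "nat \<Rightarrow> 'a set"
  have "separator_base X \<N> \<subseteq> g ` Func UNIV \<N>"
  proof
    fix B assume "B \<in> separator_base X \<N>"
    then obtain A \<A> where A: "A \<in> \<N>" "\<A> \<subseteq> \<N>" "countable \<A>" "\<A> \<noteq> {}"
      and B: "B = topspace X \<inter> \<Inter>(clopen_separator X A ` \<A>)"
      unfolding separator_base_def by blast
    define f where "f = case_nat A (from_nat_into \<A>)"
    have "range (f \<circ> Suc) = \<A>"
      using range_from_nat_into[OF A(4,3)] by (simp add: f_def comp_def)
    then have "B = g f"
      unfolding B g_def by (simp add: f_def)
    moreover have "f \<in> Func UNIV \<N>"
      using A from_nat_into[OF A(4)] by (auto simp: Func_def f_def split: nat.split)
    ultimately show "B \<in> g ` Func UNIV \<N>"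
      by blast
  qed
  then show ?thesis
    unfolding cexp_def Field_card_of
    using ordLeq_transitive[OF card_of_mono1 card_of_image] by blast
qed

lemma network_clopen_separator_avoids:
  assumes net: "is_network X \<N>"
    and K: "openin X K" "closedin X K" "Lindelof_space (subtopology X K)"
    and A: "A \<subseteq> K" and y: "y \<in> topspace X - K"
  obtains A' where "A' \<in> \<N>" "y \<notin> clopen_separator X A A'"
    "Lindelof_space (subtopology X (clopen_separator X A A'))"
proof -
  have "openin X (topspace X - K)"
    using K(2) by blast
  then obtain A' where A': "A' \<in> \<N>" "y \<in> A'" "A' \<subseteq> topspace X - K"
    using net y unfolding is_network_def by blast
  have "separates_clopen_Lindelof X A A' K"
    unfolding separates_clopen_Lindelof_def disjnt_def using K A A'(3) by blast
  then have "separates_clopen_Lindelof X A A' (clopen_separator X A A')"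
    by (rule separates_clopen_separator)
  then have "y \<notin> clopen_separator X A A'"
    "Lindelof_space (subtopology X (clopen_separator X A A'))"
    using A'(2) unfolding separates_clopen_Lindelof_def disjnt_iff by blast+
  with A'(1) show thesis
    using that by blast
qed

lemma separator_base_inside_clopen_Lindelof:
  assumes net: "is_network X \<N>"
    and K: "openin X K" "closedin X K" "Lindelof_space (subtopology X K)"
    and A: "A \<in> \<N>" "A \<subseteq> K"
  obtains B where "B \<in> separator_base X \<N>" "A \<subseteq> B" "B \<subseteq> K"
proof -
  have A_top: "A \<subseteq> topspace X"
    using A(2) K(1) openin_subset by blast
  consider "K = topspace X" | z where "z \<in> topspace X - K"
    using K(1) openin_subset by blast
  then show thesis
  proof cases
    case 1
    have "topspace X \<inter> \<Inter>(clopen_separator X A ` {A}) \<in> separator_base X \<N>"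
      using A(1) unfolding separator_base_def by blast
    with that show thesis
      using 1 subset_clopen_separator[OF A_top] A_top by auto
  next
    case 2
    have "\<exists>A'. A' \<in> \<N> \<and> y \<notin> clopen_separator X A A' \<and>
        Lindelof_space (subtopology X (clopen_separator X A A'))" if "y \<in> topspace X - K" for y
      using network_clopen_separator_avoids[OF net K A(2) that] by metis
    then obtain a where a: "\<And>y. y \<in> topspace X - K \<Longrightarrow> a y \<in> \<N> \<and>
        y \<notin> clopen_separator X A (a y) \<and> Lindelof_space (subtopology X (clopen_separator X A (a y)))"
      by metis
    define S where "S y = clopen_separator X A (a y)" for y
    define L where "L = S z \<inter> (topspace X - K)"
    have "Lindelof_space (subtopology X L)"
      unfolding L_def using a[OF 2] K(1)
      by (intro Lindelof_space_subtopology_Int_closedin) (auto simp: S_def)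
    then obtain T where T: "countable T" "T \<subseteq> L" "L \<subseteq> (\<Union>y\<in>T. topspace X - S y)"
    proof (rule Lindelof_space_subtopology_countable_subcover)
      show "L \<subseteq> topspace X"
        unfolding L_def by blast
      fix y assume "y \<in> L"
      then show "openin X (topspace X - S y)" "y \<in> topspace X - S y"
        using a[of y] clopen_separator_clopen unfolding L_def S_def by auto
    qed
    have T_K: "insert z T \<subseteq> topspace X - K"
      using 2 T(2) unfolding L_def by blast
    define B where "B = topspace X \<inter> \<Inter>(S ` insert z T)"
    show thesis
    proof
      have "S ` insert z T = clopen_separator X A ` (a ` insert z T)"
        unfolding S_def by auto
      moreover have "a ` insert z T \<subseteq> \<N>" "countable (a ` insert z T)"
        using T(1) T_K a by auto
      ultimately show "B \<in> separator_base X \<N>"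
        unfolding B_def separator_base_def using A(1)
        by (intro CollectI exI[of _ A] exI[of _ "a ` insert z T"]) simp
      show "A \<subseteq> B"
        unfolding B_def S_def using A_top subset_clopen_separator[OF A_top] by blast
      show "B \<subseteq> K"
      proof
        fix w assume w: "w \<in> B"
        show "w \<in> K"
        proof (rule ccontr)
          assume "w \<notin> K"
          with w have "w \<in> L"
            unfolding B_def L_def by blast
          then obtain y where "y \<in> T" "w \<notin> S y"
            using T(3) by blast
          with w show False
            unfolding B_def by blast
        qed
      qed
    qed
  qed
qed

lemma is_baseI:
  assumes "\<And>B. B \<in> \<B> \<Longrightarrow> openin X B"
    and "\<And>U x. openin X U \<Longrightarrow> x \<in> U \<Longrightarrow> \<exists>B\<in>\<B>. x \<in> B \<and> B \<subseteq> U"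
  shows "is_base X \<B>"
  unfolding is_base_def
proof (intro conjI allI impI ballI)
  fix U assume "openin X U"
  then have "\<Union>{B\<in>\<B>. B \<subseteq> U} = U"
    using assms(2) by blast
  then show "\<exists>\<C>\<subseteq>\<B>. \<Union>\<C> = U"
    by (intro exI[of _ "{B\<in>\<B>. B \<subseteq> U}"]) auto
qed (use assms(1) in blast)

theorem theorem3p11:
  fixes X :: "'a topology"
  assumes "locally_Menger X" and "Hausdorff_space X" and "P_space X"
  shows "\<forall>\<N>. is_network X \<N> \<longrightarrow>
           (\<exists>\<B>. is_base X \<B> \<and>
              ordLeq3 (card_of \<B>) (BNF_Cardinal_Arithmetic.cexp (card_of \<N>) (card_of (UNIV :: nat set))))"
proof (intro allI impI)
  fix \<N> assume net: "is_network X \<N>"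
  have "is_base X (separator_base X \<N>)"
  proof (rule is_baseI)
    show "openin X B" if "B \<in> separator_base X \<N>" for B
      using openin_separator_base[OF assms(3) that] .
    fix U x assume "openin X U" "x \<in> U"
    then obtain K where K: "openin X K" "closedin X K" "Lindelof_space (subtopology X K)"
      "x \<in> K" "K \<subseteq> U"
      using locally_Menger_clopen_Lindelof_neighbourhood[OF assms] by metis
    then obtain A where A: "A \<in> \<N>" "x \<in> A" "A \<subseteq> K"
      using net unfolding is_network_def by blast
    then obtain B where "B \<in> separator_base X \<N>" "A \<subseteq> B" "B \<subseteq> K"
      using separator_base_inside_clopen_Lindelof[OF net K(1-3)] by metis
    then show "\<exists>B\<in>separator_base X \<N>. x \<in> B \<and> B \<subseteq> U"
      using A K(5) by blast
  qed
  then show "\<exists>\<B>. is_base X \<B> \<and> ordLeq3 (card_of \<B>)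
      (BNF_Cardinal_Arithmetic.cexp (card_of \<N>) (card_of (UNIV :: nat set)))"
    using card_of_separator_base by blast
qed

end
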